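(* Let $S$ be a range set and $\Gamma$ the middle-third Cantor set. The set of all uniformly perfect metrics in $\mathrm{Ult}(\Gamma,S)$ is an $F_\sigma$ subset of $(\mathrm{Ult}(\Gamma,S),\mathcal{UD}_\Gamma^S)$.
   Context: A range set is $S\subseteq[0,\infty)$ with $0\in S$. $\mathrm{Ult}(X,S)$ is the set of all ultrametrics on $X$ with values in $S$ generating the topology of $X$. $\mathcal{UD}_X^S(d,e)$ is the infimum of all $\epsilon\in S\cup\{\infty\}$ such that for all $x,y$, $d(x,y)\le\max\{e(x,y),\epsilon\}$ and $e(x,y)\le\max\{d(x,y),\epsilon\}$. A metric space $(X,d)$ is uniformly perfect if there is $c\in(0,1)$ such that for every $x\in X$ and every $r\in(0,\delta_d(X))$ ($\delta_d$ = diameter) there is $y$ with $cr\le d(x,y)\le r$. $F_\sigma$: countable union of closed sets. *)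

theory Defs
  imports "HOL-Analysis.Analysis"
begin

definition range_set :: "real set \<Rightarrow> bool" where
  "range_set S \<longleftrightarrow> S \<subseteq> {0..} \<and> 0 \<in> S"

fun cantor_stage :: "nat \<Rightarrow> real set" where
  "cantor_stage 0 = {0..1}"
| "cantor_stage (Suc n) = (\<lambda>x. x / 3) ` cantor_stage n \<union> (\<lambda>x. 2/3 + x / 3) ` cantor_stage n"

definition cantor_set :: "real set" where
  "cantor_set = (\<Inter>n. cantor_stage n)"

text \<open>A metric is a function on the carrier; to identify it uniquely we
  require it to vanish outside carrier x carrier (extensionality convention).\<close>
definition Ult :: "'a topology \<Rightarrow> real set \<Rightarrow> ('a \<Rightarrow> 'a \<Rightarrow> real) set" where
  "Ult X S = {d. Metric_space (topspace X) d
      \<and> (\<forall>x\<in>topspace X. \<forall>y\<in>topspace X. \<forall>z\<in>topspace X. d x z \<le> max (d x y) (d y z))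
      \<and> (\<forall>x\<in>topspace X. \<forall>y\<in>topspace X. d x y \<in> S)
      \<and> Metric_space.mtopology (topspace X) d = X
      \<and> (\<forall>x y. (x \<notin> topspace X \<or> y \<notin> topspace X) \<longrightarrow> d x y = 0)}"

definition UD :: "'a set \<Rightarrow> real set \<Rightarrow> ('a \<Rightarrow> 'a \<Rightarrow> real) \<Rightarrow> ('a \<Rightarrow> 'a \<Rightarrow> real) \<Rightarrow> ereal" where
  "UD X S d e = Inf {\<epsilon>. (\<epsilon> = \<infinity> \<or> (\<exists>r\<in>S. \<epsilon> = ereal r))
      \<and> (\<forall>x\<in>X. \<forall>y\<in>X. ereal (d x y) \<le> max (ereal (e x y)) \<epsilon>
                      \<and> ereal (e x y) \<le> max (ereal (d x y)) \<epsilon>)}"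

definition UD_topology :: "'a topology \<Rightarrow> real set \<Rightarrow> ('a \<Rightarrow> 'a \<Rightarrow> real) topology" where
  "UD_topology X S = topology (\<lambda>U. U \<subseteq> Ult X S \<and>
      (\<forall>d\<in>U. \<exists>r>0. {e \<in> Ult X S. UD (topspace X) S d e < ereal r} \<subseteq> U))"

definition diam_of :: "'a set \<Rightarrow> ('a \<Rightarrow> 'a \<Rightarrow> real) \<Rightarrow> ereal" where
  "diam_of X d = (SUP p\<in>X \<times> X. ereal (d (fst p) (snd p)))"

definition uniformly_perfect :: "'a set \<Rightarrow> ('a \<Rightarrow> 'a \<Rightarrow> real) \<Rightarrow> bool" where
  "uniformly_perfect X d \<longleftrightarrow> (\<exists>c. 0 < c \<and> c < 1 \<and>
      (\<forall>x\<in>X. \<forall>r. 0 < r \<and> ereal r < diam_of X d \<longrightarrow>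
         (\<exists>y\<in>X. c * r \<le> d x y \<and> d x y \<le> r)))"

end

theory Submission
  imports Defs
begin

text \<open>If \<open>UD(d, e) < \<epsilon>\<close>, each of \<open>d\<close>, \<open>e\<close> is bounded by the maximum of the other and
  \<open>\<epsilon>\<close>, so the two metrics coincide at every pair of points where either exceeds \<open>\<epsilon>\<close>.
  Hence, for a fixed constant \<open>c > 0\<close>, a failure of uniform perfectness with constant \<open>c\<close>
  at scale \<open>r\<close> persists for every \<open>e\<close> within \<open>min (c r) r\<close> of \<open>d\<close>: the ultrametrics that
  are uniformly perfect with constant \<open>c\<close> form a closed set. Letting \<open>c\<close> run through
  \<open>1/(n+2)\<close> writes the uniformly perfect ones as a countable union of such sets.\<close>

definition UD_ball :: "'a topology \<Rightarrow> real set \<Rightarrow> ('a \<Rightarrow> 'a \<Rightarrow> real) \<Rightarrow> real \<Rightarrow> ('a \<Rightarrow> 'a \<Rightarrow> real) set" where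
  "UD_ball X S d r = {e \<in> Ult X S. UD (topspace X) S d e < ereal r}"

lemma UD_ball_subset: "UD_ball X S d r \<subseteq> Ult X S"
  unfolding UD_ball_def by blast

lemma UD_ball_mono: "r \<le> r' \<Longrightarrow> UD_ball X S d r \<subseteq> UD_ball X S d r'"
  unfolding UD_ball_def using order_less_le_trans by fastforce

lemma istopology_UD_open:
  "istopology (\<lambda>U. U \<subseteq> Ult X S \<and> (\<forall>d\<in>U. \<exists>r>0. UD_ball X S d r \<subseteq> U))"
  unfolding istopology_def
proof (intro conjI allI impI)
  fix U V
  assume U: "U \<subseteq> Ult X S \<and> (\<forall>d\<in>U. \<exists>r>0. UD_ball X S d r \<subseteq> U)"
    and V: "V \<subseteq> Ult X S \<and> (\<forall>d\<in>V. \<exists>r>0. UD_ball X S d r \<subseteq> V)"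
  then show "U \<inter> V \<subseteq> Ult X S" by blast
  show "\<forall>d\<in>U \<inter> V. \<exists>r>0. UD_ball X S d r \<subseteq> U \<inter> V"
  proof
    fix d assume "d \<in> U \<inter> V"
    then obtain r1 r2 where "r1 > 0" "UD_ball X S d r1 \<subseteq> U" "r2 > 0" "UD_ball X S d r2 \<subseteq> V"
      using U V by blast
    moreover have "UD_ball X S d (min r1 r2) \<subseteq> UD_ball X S d r1 \<inter> UD_ball X S d r2"
      by (simp add: UD_ball_mono)
    ultimately show "\<exists>r>0. UD_ball X S d r \<subseteq> U \<inter> V"
      by (intro exI[of _ "min r1 r2"]) auto
  qed
next
  fix K assume K: "\<forall>U\<in>K. U \<subseteq> Ult X S \<and> (\<forall>d\<in>U. \<exists>r>0. UD_ball X S d r \<subseteq> U)"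
  then show "\<Union>K \<subseteq> Ult X S"
    by (simp add: Union_least)
  show "\<forall>d\<in>\<Union>K. \<exists>r>0. UD_ball X S d r \<subseteq> \<Union>K"
  proof
    fix d assume "d \<in> \<Union>K"
    then obtain U where "U \<in> K" "d \<in> U" by blast
    with K obtain r where "r > 0" "UD_ball X S d r \<subseteq> U" by blast
    with \<open>U \<in> K\<close> show "\<exists>r>0. UD_ball X S d r \<subseteq> \<Union>K" by blast
  qed
qed

lemma openin_UD_topology:
  "openin (UD_topology X S) U \<longleftrightarrow> U \<subseteq> Ult X S \<and> (\<forall>d\<in>U. \<exists>r>0. UD_ball X S d r \<subseteq> U)"
proof -
  have "UD_topology X S = topology (\<lambda>U. U \<subseteq> Ult X S \<and> (\<forall>d\<in>U. \<exists>r>0. UD_ball X S d r \<subseteq> U))"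
    unfolding UD_topology_def UD_ball_def ..
  then show ?thesis
    by (simp add: topology_inverse' [OF istopology_UD_open])
qed

lemma topspace_UD_topology: "topspace (UD_topology X S) = Ult X S"
proof -
  have "openin (UD_topology X S) (Ult X S)"
    unfolding openin_UD_topology using UD_ball_subset zero_less_one by blast
  then have "Ult X S \<subseteq> topspace (UD_topology X S)"
    by (rule openin_subset)
  moreover have "topspace (UD_topology X S) \<subseteq> Ult X S"
    using openin_topspace[of "UD_topology X S"] unfolding openin_UD_topology by blast
  ultimately show ?thesis by blast
qed

lemma closedin_UD_topology:
  "closedin (UD_topology X S) F \<longleftrightarrow>
    F \<subseteq> Ult X S \<and> (\<forall>d\<in>Ult X S - F. \<exists>r>0. UD_ball X S d r \<inter> F = {})"
proof -
  have "UD_ball X S d r \<subseteq> Ult X S - F \<longleftrightarrow> UD_ball X S d r \<inter> F = {}" for d r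
    using UD_ball_subset by blast
  then show ?thesis
    unfolding closedin_def topspace_UD_topology openin_UD_topology by simp
qed

lemma UD_less_ereal_obtain:
  assumes "UD T S d e < ereal r"
  obtains \<epsilon> where "\<epsilon> < r"
    and "\<And>x y. x \<in> T \<Longrightarrow> y \<in> T \<Longrightarrow> d x y \<le> max (e x y) \<epsilon> \<and> e x y \<le> max (d x y) \<epsilon>"
proof -
  from assms obtain z where z: "z = \<infinity> \<or> (\<exists>r\<in>S. z = ereal r)" "z < ereal r"
    and close: "\<forall>x\<in>T. \<forall>y\<in>T. ereal (d x y) \<le> max (ereal (e x y)) z \<and> ereal (e x y) \<le> max (ereal (d x y)) z"
    unfolding UD_def by (auto simp: Inf_less_iff)
  then obtain \<epsilon> where \<epsilon>: "z = ereal \<epsilon>" by auto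
  have max_ereal: "max (ereal a) (ereal b) = ereal (max a b)" for a b
    by (simp add: max_def)
  show thesis
  proof (rule that)
    show "\<epsilon> < r" using z(2) \<epsilon> by simp
    fix x y assume "x \<in> T" "y \<in> T"
    then show "d x y \<le> max (e x y) \<epsilon> \<and> e x y \<le> max (d x y) \<epsilon>"
      using close unfolding \<epsilon> max_ereal ereal_less_eq by blast
  qed
qed

lemma eq_if_max_close:
  fixes a b \<epsilon> :: real
  assumes "a \<le> max b \<epsilon>" "b \<le> max a \<epsilon>" "\<epsilon> < a \<or> \<epsilon> < b"
  shows "a = b"
  using assms by (auto simp: max_def split: if_splits)

definition uniformly_perfect_with :: "'a set \<Rightarrow> real \<Rightarrow> ('a \<Rightarrow> 'a \<Rightarrow> real) \<Rightarrow> bool" where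
  "uniformly_perfect_with X c d \<longleftrightarrow> (\<forall>x\<in>X. \<forall>r. 0 < r \<and> ereal r < diam_of X d \<longrightarrow>
      (\<exists>y\<in>X. c * r \<le> d x y \<and> d x y \<le> r))"

lemma uniformly_perfect_with_mono:
  assumes "uniformly_perfect_with X c d" "c' \<le> c"
  shows "uniformly_perfect_with X c' d"
  unfolding uniformly_perfect_with_def
proof (intro ballI allI impI)
  fix x r assume "x \<in> X" and r: "0 < r \<and> ereal r < diam_of X d"
  then obtain y where "y \<in> X" "c * r \<le> d x y" "d x y \<le> r"
    using assms(1) unfolding uniformly_perfect_with_def by blast
  moreover have "c' * r \<le> c * r"
    using assms(2) r by (simp add: mult_right_mono)
  ultimately show "\<exists>y\<in>X. c' * r \<le> d x y \<and> d x y \<le> r" by (meson order_trans)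
qed

lemma uniformly_perfect_iff_ex_nat:
  "uniformly_perfect X d \<longleftrightarrow> (\<exists>n::nat. uniformly_perfect_with X (1 / (real n + 2)) d)"
proof
  assume "uniformly_perfect X d"
  then obtain c where "0 < c" and c: "uniformly_perfect_with X c d"
    unfolding uniformly_perfect_def uniformly_perfect_with_def by blast
  then obtain n where "inverse (real (Suc n)) < c"
    using reals_Archimedean by blast
  moreover have "1 / (real n + 2) \<le> inverse (real (Suc n))"
    by (simp add: inverse_eq_divide divide_left_mono)
  ultimately have "1 / (real n + 2) \<le> c" by linarith
  then show "\<exists>n::nat. uniformly_perfect_with X (1 / (real n + 2)) d"
    using c uniformly_perfect_with_mono by blast
next
  assume "\<exists>n::nat. uniformly_perfect_with X (1 / (real n + 2)) d"
  then obtain n :: nat where "uniformly_perfect_with X (1 / (real n + 2)) d" ..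
  moreover have "0 < 1 / (real n + 2)" "1 / (real n + 2) < 1" by auto
  ultimately show "uniformly_perfect X d"
    unfolding uniformly_perfect_def uniformly_perfect_with_def by blast
qed

lemma closedin_uniformly_perfect_with:
  assumes "0 < c"
  shows "closedin (UD_topology X S) {d \<in> Ult X S. uniformly_perfect_with (topspace X) c d}"
    (is "closedin _ ?F")
  unfolding closedin_UD_topology
proof (intro conjI ballI)
  fix d assume "d \<in> Ult X S - ?F"
  then obtain x r where x: "x \<in> topspace X" and "0 < r" and r: "ereal r < diam_of (topspace X) d"
    and no_y: "\<not> (\<exists>y\<in>topspace X. c * r \<le> d x y \<and> d x y \<le> r)"
    unfolding uniformly_perfect_with_def by blast
  obtain p q where pq: "p \<in> topspace X" "q \<in> topspace X" "r < d p q"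
    using r unfolding diam_of_def by (auto simp: less_SUP_iff)
  define \<rho> where "\<rho> = min (c * r) r"
  have "e \<notin> ?F" if "e \<in> UD_ball X S d \<rho>" for e
  proof
    assume "e \<in> ?F"
    from \<open>e \<in> UD_ball X S d \<rho>\<close> have "UD (topspace X) S d e < ereal \<rho>"
      unfolding UD_ball_def by blast
    then obtain \<epsilon> where "\<epsilon> < \<rho>"
      and close: "\<And>x y. x \<in> topspace X \<Longrightarrow> y \<in> topspace X \<Longrightarrow>
          d x y \<le> max (e x y) \<epsilon> \<and> e x y \<le> max (d x y) \<epsilon>"
      by (rule UD_less_ereal_obtain) blast
    then have "\<epsilon> < c * r" "\<epsilon> < r"
      unfolding \<rho>_def by auto
    have "d p q = e p q"
      using close[OF pq(1,2)] pq(3) \<open>\<epsilon> < r\<close> by (intro eq_if_max_close) auto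
    then have "ereal r < diam_of (topspace X) e"
      using pq unfolding diam_of_def by (auto simp: less_SUP_iff)
    then obtain y where y: "y \<in> topspace X" "c * r \<le> e x y" "e x y \<le> r"
      using \<open>e \<in> ?F\<close> x \<open>0 < r\<close> unfolding uniformly_perfect_with_def by blast
    have "d x y = e x y"
      using close[OF x y(1)] y(2) \<open>\<epsilon> < c * r\<close> by (intro eq_if_max_close) auto
    with no_y y show False by auto
  qed
  moreover have "0 < \<rho>"
    using \<open>0 < c\<close> \<open>0 < r\<close> unfolding \<rho>_def by simp
  ultimately show "\<exists>r>0. UD_ball X S d r \<inter> ?F = {}"
    by blast
qed auto

lemma fsigma_in_uniformly_perfect_Ult:
  "fsigma_in (UD_topology X S) {d \<in> Ult X S. uniformly_perfect (topspace X) d}"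
proof -
  have eq: "{d \<in> Ult X S. uniformly_perfect (topspace X) d} =
      (\<Union>n. {d \<in> Ult X S. uniformly_perfect_with (topspace X) (1 / (real n + 2)) d})"
    by (auto simp: uniformly_perfect_iff_ex_nat)
  have "closedin (UD_topology X S)
      {d \<in> Ult X S. uniformly_perfect_with (topspace X) (1 / (real n + 2)) d}" for n
    by (rule closedin_uniformly_perfect_with) simp
  then show ?thesis
    unfolding eq by (intro fsigma_in_Union) (auto intro: closed_imp_fsigma_in)
qed

theorem lemma4p2:
  fixes S :: "real set"
  assumes "range_set S"
  shows "fsigma_in (UD_topology (top_of_set cantor_set) S)
           {d \<in> Ult (top_of_set cantor_set) S. uniformly_perfect cantor_set d}"
  using fsigma_in_uniformly_perfect_Ult[of "top_of_set cantor_set" S] by simp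

end
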